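(* Fix $\epsilon\in(0,1)$ and $\alpha,\beta>0$ with $\alpha+\beta\le\epsilon/4$. Let $M$ be an ordered matching on $2n^{1/2+\alpha}$ vertices with interval chromatic number $2$, such that its corresponding permutation $\pi=\pi(M)$ satisfies $\mathrm{Int}(\pi,\pi+h)\le n^{(1-\epsilon)(1/2+\alpha)}$ for every $h\in[n^{1/2+\alpha}]$. Then every red/blue coloring of the edges of the ordered complete graph on $[2n]$ contains either (i) a blue triangle, (ii) a red clique on at least $n^{1/2+\beta}/4-n^{\epsilon/4}/2$ vertices, or (iii) a red ordered copy of $M$ within the bipartite subgraph between $[1,n]$ and $[n+1,2n]$ (i.e., the first half of the vertices of $M$ are mapped into $[1,n]$ and the second half into $[n+1,2n]$).
   Context: An ordered graph on $[N]$ is a graph with vertex set $\{1,\dots,N\}$ with the natural order; a red ordered copy of an ordered graph $G$ on $[p]$ in a red/blue coloring of the complete graph on $[N]$ is a strictly increasing map $\varphi:[p]\to[N]$ with $\varphi(u)\varphi(v)$ red for every edge $uv$ of $G$. The interval chromatic number of an ordered graph is the minimum number of contiguous intervals into which the vertex set can be split so that each interval is independent. An ordered matching $M$ on $[2m]$ with interval chromatic number $2$ has every edge between $[1,m]$ and $[m+1,2m]$; its corresponding permutation $\pi(M)\in S_m$ maps $i$ to $j-m$ for every edge $\{i,j\}$ of $M$ with $i\le m<j$. For a sequence $\sigma=(\sigma(1),\dots,\sigma(m))$ of distinct integers, an exact pattern of $\sigma$ is a sequence $\rho=(\rho(1),\dots,\rho(k))$ such that there are indices $1\le i_1<\dots<i_k\le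 m$ with $\sigma(i_j)=\rho(j)$ for all $j$. For $\pi\in S_m$ and an integer $h$, $\pi+h$ denotes the sequence $(\pi(1)+h,\dots,\pi(m)+h)$. The ordered intersection $\mathrm{Int}(\sigma,\tau)$ of two such sequences is the largest $k$ such that $\sigma$ and $\tau$ share a common exact pattern of length $k$. *)

theory Defs
  imports "HOL-Analysis.Analysis" "HOL-Library.Sublist"
begin

definition exact_pattern :: "int list \<Rightarrow> int list \<Rightarrow> bool" where
  "exact_pattern \<rho> \<sigma> \<longleftrightarrow> subseq \<rho> \<sigma>"

definition ord_int :: "int list \<Rightarrow> int list \<Rightarrow> nat" where
  "ord_int \<sigma> \<tau> = Max {length \<rho> | \<rho>. exact_pattern \<rho> \<sigma> \<and> exact_pattern \<rho> \<tau>}"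

text \<open>An ordered matching on [2m] with interval chromatic number 2, given (as in the paper)
  with every edge between [1,m] and [m+1,2m]: edges are represented as pairs (i,j) with
  i in [1,m] and j in [m+1,2m]; every vertex of [2m] lies in exactly one edge
  (the corresponding permutation lies in S_m).\<close>

definition bip_ordered_matching :: "nat \<Rightarrow> (nat \<times> nat) set \<Rightarrow> bool" where
  "bip_ordered_matching m M \<longleftrightarrow>
     (\<forall>(i,j)\<in>M. i \<in> {1..m} \<and> j \<in> {m+1..2*m}) \<and>
     (\<forall>i\<in>{1..m}. \<exists>!j. (i,j) \<in> M) \<and>
     (\<forall>j\<in>{m+1..2*m}. \<exists>!i. (i,j) \<in> M)"

definition match_perm :: "nat \<Rightarrow> (nat \<times> nat) set \<Rightarrow> nat \<Rightarrow> nat" where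
  "match_perm m M i = (THE j. (i, j + m) \<in> M)"

definition perm_seq :: "nat \<Rightarrow> (nat \<Rightarrow> nat) \<Rightarrow> int list" where
  "perm_seq m \<pi> = map (\<lambda>i. int (\<pi> i)) [1..<m+1]"

definition shift_seq :: "int list \<Rightarrow> int \<Rightarrow> int list" where
  "shift_seq \<sigma> h = map (\<lambda>x. x + h) \<sigma>"

text \<open>Red/blue colouring of the complete graph on [N]: red e says edge e (a 2-set) is red,
  otherwise it is blue.\<close>

definition blue_triangle :: "nat \<Rightarrow> (nat set \<Rightarrow> bool) \<Rightarrow> bool" where
  "blue_triangle N red \<longleftrightarrow> (\<exists>a b c. 1 \<le> a \<and> a < b \<and> b < c \<and> c \<le> N \<and>
      \<not> red {a,b} \<and> \<not> red {a,c} \<and> \<not> red {b,c})"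

definition red_clique :: "nat \<Rightarrow> (nat set \<Rightarrow> bool) \<Rightarrow> nat set \<Rightarrow> bool" where
  "red_clique N red K \<longleftrightarrow> K \<subseteq> {1..N} \<and> (\<forall>x\<in>K. \<forall>y\<in>K. x \<noteq> y \<longrightarrow> red {x,y})"

definition red_bip_copy :: "nat \<Rightarrow> (nat set \<Rightarrow> bool) \<Rightarrow> nat \<Rightarrow> (nat \<times> nat) set \<Rightarrow> bool" where
  "red_bip_copy n red m M \<longleftrightarrow> (\<exists>\<phi>::nat \<Rightarrow> nat.
      strict_mono_on {1..2*m} \<phi> \<and>
      \<phi> ` {1..m} \<subseteq> {1..n} \<and> \<phi> ` {m+1..2*m} \<subseteq> {n+1..2*n} \<and>
      (\<forall>(i,j)\<in>M. red {\<phi> i, \<phi> j}))"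

end

theory Submission
  imports Defs
begin

text \<open>
  Assume there is no blue triangle, no red clique on T vertices and no red bipartite copy of M,
  and let \<pi> be the permutation of M.  The blue neighbours in [1,n] of a vertex of [n+1,2n] form
  a red clique, so there are fewer than T of them.  For a shift c, embed M greedily with its
  right half placed on n+c+1, ..., n+c+m.  Since the embedding fails, at least n-m+1 vertices u
  of [1,n] are blocked at some level lv u, witnessed by the blue edge from u to
  n+c+\<pi>(lv u + 1).  Levels are monotone in u, so the common right endpoints of the blocked
  edges of two shifts c < c' form a common exact pattern of \<pi> and \<pi>+(c'-c): the two edge
  families share at most T I edges.  All blocked edges of the shifts c < K end in a window of
  K-1+m vertices, and Bonferroni's inequality gives
  K (n-m+1) - T I K (K-1) / 2 \<le> (K-1+m) T, which fails for K close to n / (T I).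
\<close>

section \<open>Common exact patterns\<close>

lemma length_le_ord_int:
  assumes "subseq \<rho> \<sigma>" "subseq \<rho> \<tau>"
  shows "length \<rho> \<le> ord_int \<sigma> \<tau>"
proof -
  have "finite {length \<rho> | \<rho>. exact_pattern \<rho> \<sigma> \<and> exact_pattern \<rho> \<tau>}"
    by (rule finite_subset[of _ "{..length \<sigma>}"])
       (auto simp: exact_pattern_def dest: list_emb_length)
  then show ?thesis
    unfolding ord_int_def by (rule Max_ge) (use assms in \<open>auto simp: exact_pattern_def\<close>)
qed

lemma subseq_map_nth_sorted_list_of_set:
  assumes "I \<subseteq> {..<length xs}"
  shows "subseq (map ((!) xs) (sorted_list_of_set I)) xs"
proof -
  have "finite I" using assms finite_subset by blast
  then have "sorted_list_of_set I = filter (\<lambda>i. i \<in> I) [0..<length xs]"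
    by (intro sorted_distinct_set_unique[symmetric])
      (use assms in \<open>auto intro: sorted_wrt_filter\<close>)
  then show ?thesis
    by (metis map_nth subseq_filter_left subseq_map)
qed

lemma sorted_list_of_set_image_strict_mono_on:
  assumes "finite I" "strict_mono_on I g"
  shows "sorted_list_of_set (g ` I) = map g (sorted_list_of_set I)"
proof -
  have "sorted_wrt (<) (map g (sorted_list_of_set I))"
    using assms unfolding sorted_wrt_map
    by (auto intro: sorted_wrt_mono_rel[of _ "(<)"] simp: strict_mono_on_def)
  then show ?thesis
    using assms by (intro sorted_distinct_set_unique) (auto simp: strict_sorted_iff)
qed

lemma card_le_ord_int:
  assumes "I \<subseteq> {..<length \<sigma>}" "g ` I \<subseteq> {..<length \<tau>}" "strict_mono_on I g"
    and "\<And>i. i \<in> I \<Longrightarrow> \<sigma> ! i = \<tau> ! g i"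
  shows "card I \<le> ord_int \<sigma> \<tau>"
proof -
  have "finite I" using assms(1) finite_subset by blast
  define \<rho> where "\<rho> = map ((!) \<sigma>) (sorted_list_of_set I)"
  have "\<rho> = map ((!) \<tau>) (sorted_list_of_set (g ` I))"
    unfolding \<rho>_def sorted_list_of_set_image_strict_mono_on[OF \<open>finite I\<close> assms(3)]
    using assms(4) \<open>finite I\<close> by simp
  then have "length \<rho> \<le> ord_int \<sigma> \<tau>"
    using length_le_ord_int subseq_map_nth_sorted_list_of_set assms(1,2) \<rho>_def by metis
  then show ?thesis unfolding \<rho>_def by simp
qed

lemma card_image_le_ord_int:
  fixes f g :: "'a::linorder \<Rightarrow> nat"
  assumes "distinct \<sigma>" "distinct \<tau>" "mono_on U f" "mono_on U g"
    and "f ` U \<subseteq> {..<length \<sigma>}" "g ` U \<subseteq> {..<length \<tau>}"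
    and "\<And>u. u \<in> U \<Longrightarrow> \<sigma> ! f u = \<tau> ! g u"
  shows "card (f ` U) \<le> ord_int \<sigma> \<tau>"
proof -
  have f_eq_iff_g_eq: "f u = f u' \<longleftrightarrow> g u = g u'" if "u \<in> U" "u' \<in> U" for u u'
    using assms(5-7) that nth_eq_iff_index_eq[OF assms(1)] nth_eq_iff_index_eq[OF assms(2)]
    by (metis image_subset_iff lessThan_iff)
  define h where "h = g \<circ> inv_into U f"
  have h_f: "h (f u) = g u" if "u \<in> U" for u
    unfolding h_def using that f_eq_iff_g_eq inv_into_into[of "f u" f U] f_inv_into_f[of "f u" f U]
    by auto
  have "strict_mono_on (f ` U) h"
  proof (rule strict_mono_onI)
    fix i i' assume "i \<in> f ` U" "i' \<in> f ` U" "i < i'"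
    then obtain u u' where u: "u \<in> U" "u' \<in> U" "i = f u" "i' = f u'" by blast
    then have "u < u'" using \<open>i < i'\<close> assms(3) by (metis leD linorder_le_less_linear mono_onD)
    then have "g u \<le> g u'" using assms(4) u by (simp add: mono_onD)
    moreover have "g u \<noteq> g u'" using f_eq_iff_g_eq[OF u(1,2)] u \<open>i < i'\<close> by simp
    ultimately show "h i < h i'" using h_f u by simp
  qed
  then show ?thesis
    using assms(5-7) h_f by (intro card_le_ord_int) auto
qed

lemma length_perm_seq [simp]: "length (perm_seq m \<pi>) = m"
  by (simp add: perm_seq_def)

lemma nth_perm_seq [simp]: "k < m \<Longrightarrow> perm_seq m \<pi> ! k = int (\<pi> (Suc k))"
  by (simp add: perm_seq_def del: upt_Suc)

lemma distinct_perm_seq: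
  assumes "inj_on \<pi> {1..m}"
  shows "distinct (perm_seq m \<pi>)"
proof -
  have "inj_on (int \<circ> \<pi>) (set [1..<m+1])"
    using assms
    by (intro comp_inj_on) (auto simp: atLeastLessThanSuc_atLeastAtMost simp del: upt_Suc)
  then show ?thesis
    unfolding perm_seq_def distinct_map by (simp add: comp_def del: upt_Suc)
qed

lemma distinct_shift_seq: "distinct (shift_seq \<sigma> h) \<longleftrightarrow> distinct \<sigma>"
  by (simp add: shift_seq_def distinct_map)

section \<open>Greedy embedding\<close>

definition chain_within :: "(nat \<Rightarrow> nat \<Rightarrow> bool) \<Rightarrow> nat \<Rightarrow> nat \<Rightarrow> bool" where
  "chain_within ok k u \<longleftrightarrow>
     (\<exists>x. strict_mono_on {1..k} x \<and> (\<forall>i\<in>{1..k}. x i \<in> {1..u} \<and> ok (x i) i))"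

lemma chain_within_0: "chain_within ok 0 u"
  unfolding chain_within_def by (auto simp: strict_mono_on_def)

lemma chain_within_mono: "chain_within ok k u \<Longrightarrow> u \<le> u' \<Longrightarrow> chain_within ok k u'"
  unfolding chain_within_def by fastforce

lemma chain_within_Suc:
  assumes "chain_within ok k u" "ok (Suc u) (Suc k)"
  shows "chain_within ok (Suc k) (Suc u)"
proof -
  obtain x where x: "strict_mono_on {1..k} x" "\<forall>i\<in>{1..k}. x i \<in> {1..u} \<and> ok (x i) i"
    using assms(1) unfolding chain_within_def by blast
  define y where "y = x(Suc k := Suc u)"
  have "strict_mono_on {1..Suc k} y"
  proof (rule strict_mono_onI)
    fix i j assume "i \<in> {1..Suc k}" "j \<in> {1..Suc k}" "i < j"
    then show "y i < y j"
    proof (cases "j = Suc k")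
      case True
      then have "x i \<le> u" using x(2) \<open>i \<in> {1..Suc k}\<close> \<open>i < j\<close> by auto
      then show ?thesis using True \<open>i < j\<close> unfolding y_def by simp
    next
      case False
      then show ?thesis
        using x(1) \<open>i \<in> {1..Suc k}\<close> \<open>j \<in> {1..Suc k}\<close> \<open>i < j\<close>
        unfolding y_def strict_mono_on_def by auto
    qed
  qed
  moreover have "\<forall>i\<in>{1..Suc k}. y i \<in> {1..Suc u} \<and> ok (y i) i"
    using x(2) assms(2) unfolding y_def by (auto simp: le_Suc_eq)
  ultimately show ?thesis unfolding chain_within_def by blast
qed

lemma card_jumps_le:
  fixes f :: "nat \<Rightarrow> nat"
  assumes "mono f"
  shows "card {u \<in> {1..n}. f u \<noteq> f (u - 1)} + f 0 \<le> f n"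
proof (induction n)
  case (Suc n)
  have "{u \<in> {1..Suc n}. f u \<noteq> f (u - 1)} =
      {u \<in> {1..n}. f u \<noteq> f (u - 1)} \<union> (if f (Suc n) \<noteq> f n then {Suc n} else {})"
    by (auto simp: le_Suc_eq)
  moreover have "f n \<le> f (Suc n)" using assms by (simp add: monoD)
  ultimately show ?case using Suc.IH by (cases "f (Suc n) = f n") auto
qed simp

lemma greedy_chain_or_blocked:
  fixes ok :: "nat \<Rightarrow> nat \<Rightarrow> bool"
  assumes "\<not> chain_within ok m n"
  obtains S lv where "S \<subseteq> {1..n}" "n + 1 \<le> card S + m" "mono_on S lv"
    and "\<And>u. u \<in> S \<Longrightarrow> lv u < m \<and> \<not> ok u (Suc (lv u))"
proof -
  txt \<open>L u, the longest chain inside [1..u], grows fewer than m times on [1..n]; a vertex u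
    where it does not grow cannot extend a chain of length L (u - 1) = L u.\<close>
  define L where "L u = Max {k. k \<le> m \<and> chain_within ok k u}" for u
  have fin: "finite {k. k \<le> m \<and> chain_within ok k u}" for u by simp
  have L: "L u \<le> m \<and> chain_within ok (L u) u" for u
    using Max_in[OF fin, of u] chain_within_0[of ok u] unfolding L_def by blast
  have L_ge: "k \<le> L u" if "k \<le> m" "chain_within ok k u" for k u
    unfolding L_def using that by (intro Max_ge[OF fin]) simp
  have "mono L"
    by (rule monoI) (use L L_ge chain_within_mono in blast)
  have L_less: "L u < m" if "u \<le> n" for u
    using L[of u] assms chain_within_mono[OF _ that] by (metis le_neq_implies_less)
  define S where "S = {u \<in> {1..n}. L u = L (u - 1)}"
  have "S \<union> {u \<in> {1..n}. L u \<noteq> L (u - 1)} = {1..n}" by (auto simp: S_def)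
  then have "card S + card {u \<in> {1..n}. L u \<noteq> L (u - 1)} = n"
    by (subst card_Un_disjoint[symmetric]) (auto simp: S_def)
  moreover have "card {u \<in> {1..n}. L u \<noteq> L (u - 1)} < m"
    using card_jumps_le[OF \<open>mono L\<close>, of n] L_less[of n] by simp
  ultimately have "n + 1 \<le> card S + m" by linarith
  moreover have "L u < m \<and> \<not> ok u (Suc (L u))" if "u \<in> S" for u
  proof -
    have u: "1 \<le> u" "u \<le> n" "L u = L (u - 1)" using that by (auto simp: S_def)
    have "\<not> ok u (Suc (L u))"
    proof
      assume "ok u (Suc (L u))"
      then have "chain_within ok (Suc (L u)) u"
        using chain_within_Suc[of ok "L u" "u - 1"] L[of "u - 1"] u by simp
      then have "Suc (L u) \<le> L u" using L_ge L_less[OF u(2)] by (simp add: Suc_leI)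
      then show False by simp
    qed
    then show ?thesis using L_less u(2) by blast
  qed
  moreover have "mono_on S L" using \<open>mono L\<close> by (rule mono_imp_mono_on)
  moreover have "S \<subseteq> {1..n}" by (auto simp: S_def)
  ultimately show ?thesis using that by blast
qed

section \<open>Ordered matchings and shifted embeddings\<close>

lemma bip_ordered_matching_edge:
  assumes "bip_ordered_matching m M" "(i, j) \<in> M"
  shows "i \<in> {1..m} \<and> j = m + match_perm m M i"
proof -
  have ij: "i \<in> {1..m}" "j \<in> {m+1..2*m}"
    using assms unfolding bip_ordered_matching_def by auto
  then have unique: "\<exists>!j. (i, j) \<in> M" using assms(1) unfolding bip_ordered_matching_def by blast
  have "match_perm m M i = j - m"
    unfolding match_perm_def
  proof (rule the_equality)
    show "(i, j - m + m) \<in> M" using assms(2) ij(2) by simp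
  next
    fix j' assume "(i, j' + m) \<in> M"
    then have "j' + m = j" using unique assms(2) by blast
    then show "j' = j - m" by simp
  qed
  then show ?thesis using ij by simp
qed

lemma bip_ordered_matching_perm:
  assumes "bip_ordered_matching m M" "i \<in> {1..m}"
  shows "(i, m + match_perm m M i) \<in> M" "match_perm m M i \<in> {1..m}"
proof -
  obtain j where j: "(i, j) \<in> M" using assms unfolding bip_ordered_matching_def by blast
  then have "j \<in> {m+1..2*m}" using assms unfolding bip_ordered_matching_def by auto
  moreover have "j = m + match_perm m M i" using bip_ordered_matching_edge[OF assms(1) j] by simp
  ultimately show "(i, m + match_perm m M i) \<in> M" "match_perm m M i \<in> {1..m}"
    using j by auto
qed

lemma inj_on_match_perm:
  assumes "bip_ordered_matching m M"
  shows "inj_on (match_perm m M) {1..m}"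
proof (rule inj_onI)
  fix i i' assume i: "i \<in> {1..m}" "i' \<in> {1..m}" and eq: "match_perm m M i = match_perm m M i'"
  let ?j = "m + match_perm m M i"
  have "(i, ?j) \<in> M" "(i', ?j) \<in> M" "?j \<in> {m+1..2*m}"
    using bip_ordered_matching_perm[OF assms i(1)] bip_ordered_matching_perm(1)[OF assms i(2)] eq
    by auto
  moreover have "\<exists>!i. (i, ?j) \<in> M"
    using assms \<open>?j \<in> {m+1..2*m}\<close> unfolding bip_ordered_matching_def by blast
  ultimately show "i = i'" by blast
qed

lemma red_bip_copy_of_chain:
  assumes "bip_ordered_matching m M" "c + m \<le> n"
    and "chain_within (\<lambda>u i. red {u, n + c + match_perm m M i}) m n"
  shows "red_bip_copy n red m M"
proof -
  obtain x where x: "strict_mono_on {1..m} x"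
    "\<And>i. i \<in> {1..m} \<Longrightarrow> x i \<in> {1..n} \<and> red {x i, n + c + match_perm m M i}"
    using assms(3) unfolding chain_within_def by blast
  define \<phi> where "\<phi> i = (if i \<le> m then x i else n + c + (i - m))" for i
  have "strict_mono_on {1..2*m} \<phi>"
  proof (rule strict_mono_onI)
    fix i j assume "i \<in> {1..2*m}" "j \<in> {1..2*m}" "i < j"
    then show "\<phi> i < \<phi> j"
      using x strict_mono_onD[OF x(1)] unfolding \<phi>_def by (cases "j \<le> m"; fastforce)
  qed
  moreover have "\<phi> ` {1..m} \<subseteq> {1..n}" "\<phi> ` {m+1..2*m} \<subseteq> {n+1..2*n}"
    using x(2) assms(2) unfolding \<phi>_def by auto
  moreover have "red {\<phi> i, \<phi> j}" if "(i, j) \<in> M" for i j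
  proof -
    have i: "i \<in> {1..m}" "j = m + match_perm m M i"
      using bip_ordered_matching_edge[OF assms(1) that] by auto
    moreover have "match_perm m M i \<in> {1..m}"
      using bip_ordered_matching_perm(2)[OF assms(1) i(1)] .
    ultimately have "\<phi> i = x i" "\<phi> j = n + c + match_perm m M i"
      unfolding \<phi>_def by auto
    then show ?thesis using x(2)[OF i(1)] by simp
  qed
  ultimately show ?thesis unfolding red_bip_copy_def by blast
qed

lemma blocked_vertices_of_no_red_copy:
  assumes "bip_ordered_matching m M" "\<not> red_bip_copy n red m M" "c + m \<le> n"
  obtains S lv where "S \<subseteq> {1..n}" "n + 1 \<le> card S + m" "mono_on S lv"
    and "\<And>u. u \<in> S \<Longrightarrow> lv u < m \<and> \<not> red {u, n + c + match_perm m M (Suc (lv u))}"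
proof -
  have "\<not> chain_within (\<lambda>u i. red {u, n + c + match_perm m M i}) m n"
    using red_bip_copy_of_chain[OF assms(1,3)] assms(2) by blast
  then show ?thesis using that by (rule greedy_chain_or_blocked)
qed

text \<open>With the right half of M placed on v+1, ..., v+m, a vertex u blocked at level lv u (pattern
  positions 1, ..., lv u embed into [1,u], but position lv u + 1 cannot be placed at u) is
  witnessed by its blue edge to v + \<pi>(lv u + 1).  Levels are 0-based indices into perm_seq.\<close>

definition blocked_edges :: "nat \<Rightarrow> (nat \<Rightarrow> nat) \<Rightarrow> nat set \<Rightarrow> (nat \<Rightarrow> nat) \<Rightarrow> (nat \<times> nat) set" where
  "blocked_edges v \<pi> S lv = (\<lambda>u. (u, v + \<pi> (Suc (lv u)))) ` S"

text \<open>A common endpoint c + \<pi>(i+1) = c' + \<pi>(j+1) matches entry i of perm_seq m \<pi> with entry j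
  of its shift by c' - c; as both levels are monotone in u, the matches form a common exact
  pattern.\<close>

lemma card_snd_blocked_edges_Int_le_ord_int:
  assumes "inj_on \<pi> {1..m}" "mono_on S lv" "mono_on S' lv'"
    and "\<forall>u\<in>S. lv u < m" "\<forall>u\<in>S'. lv' u < m" "c \<le> c'"
  shows "card (snd ` (blocked_edges c \<pi> S lv \<inter> blocked_edges c' \<pi> S' lv'))
    \<le> ord_int (perm_seq m \<pi>) (shift_seq (perm_seq m \<pi>) (int (c' - c)))"
proof -
  define U where "U = {u \<in> S \<inter> S'. c + \<pi> (Suc (lv u)) = c' + \<pi> (Suc (lv' u))}"
  have "U \<subseteq> S" "U \<subseteq> S'" by (auto simp: U_def)
  have "snd ` (blocked_edges c \<pi> S lv \<inter> blocked_edges c' \<pi> S' lv') \<subseteq> (\<lambda>i. c + \<pi> (Suc i)) ` lv ` U"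
  proof
    fix v assume "v \<in> snd ` (blocked_edges c \<pi> S lv \<inter> blocked_edges c' \<pi> S' lv')"
    then obtain u where "u \<in> S" "u \<in> S'" "v = c + \<pi> (Suc (lv u))" "v = c' + \<pi> (Suc (lv' u))"
      unfolding blocked_edges_def by auto
    then show "v \<in> (\<lambda>i. c + \<pi> (Suc i)) ` lv ` U" unfolding U_def by auto
  qed
  moreover have "finite (lv ` U)"
    using assms(4) \<open>U \<subseteq> S\<close> by (intro finite_subset[OF _ finite_lessThan[of m]]) auto
  ultimately have "card (snd ` (blocked_edges c \<pi> S lv \<inter> blocked_edges c' \<pi> S' lv')) \<le> card (lv ` U)"
    by (meson card_image_le card_mono finite_imageI order_trans)
  also have "\<dots> \<le> ord_int (perm_seq m \<pi>) (shift_seq (perm_seq m \<pi>) (int (c' - c)))"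
  proof (rule card_image_le_ord_int)
    show "distinct (perm_seq m \<pi>)" using assms(1) by (rule distinct_perm_seq)
    then show "distinct (shift_seq (perm_seq m \<pi>) (int (c' - c)))" by (simp only: distinct_shift_seq)
    show "mono_on U lv" using assms(2) \<open>U \<subseteq> S\<close> by (rule mono_on_subset)
    show "mono_on U lv'" using assms(3) \<open>U \<subseteq> S'\<close> by (rule mono_on_subset)
    show "lv ` U \<subseteq> {..<length (perm_seq m \<pi>)}" using assms(4) \<open>U \<subseteq> S\<close> by auto
    show "lv' ` U \<subseteq> {..<length (shift_seq (perm_seq m \<pi>) (int (c' - c)))}"
      using assms(5) \<open>U \<subseteq> S'\<close> by (auto simp: shift_seq_def)
  next
    fix u assume "u \<in> U"
    then have "lv u < m" "lv' u < m" "c + \<pi> (Suc (lv u)) = c' + \<pi> (Suc (lv' u))"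
      using assms(4,5) by (auto simp: U_def)
    then show "perm_seq m \<pi> ! lv u = shift_seq (perm_seq m \<pi>) (int (c' - c)) ! lv' u"
      using assms(6) by (simp add: shift_seq_def of_nat_diff)
  qed
  finally show ?thesis .
qed

lemma card_snd_blocked_edges_Int_le:
  fixes I :: real
  assumes \<pi>: "inj_on \<pi> {1..m}" "\<pi> ` {1..m} \<subseteq> {1..m}"
    and lv: "mono_on S lv" "mono_on S' lv'" "\<forall>u\<in>S. lv u < m" "\<forall>u\<in>S'. lv' u < m"
    and ord: "\<forall>h\<in>{1..m}. ord_int (perm_seq m \<pi>) (shift_seq (perm_seq m \<pi>) (int h)) \<le> I"
    and "0 \<le> I" "c < c'"
  shows "card (snd ` (blocked_edges c \<pi> S lv \<inter> blocked_edges c' \<pi> S' lv')) \<le> I"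
proof (cases "c' - c \<le> m")
  case True
  then have "ord_int (perm_seq m \<pi>) (shift_seq (perm_seq m \<pi>) (int (c' - c))) \<le> I"
    using ord \<open>c < c'\<close> by (simp del: of_nat_diff)
  moreover have "card (snd ` (blocked_edges c \<pi> S lv \<inter> blocked_edges c' \<pi> S' lv'))
      \<le> ord_int (perm_seq m \<pi>) (shift_seq (perm_seq m \<pi>) (int (c' - c)))"
    using \<open>c < c'\<close> by (intro card_snd_blocked_edges_Int_le_ord_int[OF \<pi>(1) lv]) simp
  ultimately show ?thesis by linarith
next
  case False
  have "c + \<pi> (Suc i) < c' + \<pi> (Suc i')" if "i < m" "i' < m" for i i'
  proof -
    have "\<pi> (Suc i) \<le> m" "1 \<le> \<pi> (Suc i')" using \<pi>(2) that by (auto simp: image_subset_iff)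
    then show ?thesis using False by linarith
  qed
  then have "blocked_edges c \<pi> S lv \<inter> blocked_edges c' \<pi> S' lv' = {}"
    using lv(3,4) unfolding blocked_edges_def by fastforce
  then show ?thesis using \<open>0 \<le> I\<close> by simp
qed

section \<open>Counting blocked blue edges\<close>

lemma card_UN_ge_uniform_Bonferroni:
  fixes E :: "nat \<Rightarrow> 'a set" and a b :: real
  assumes "\<And>c. c < K \<Longrightarrow> finite (E c)" "\<And>c. c < K \<Longrightarrow> a \<le> card (E c)"
    and "\<And>c c'. c < c' \<Longrightarrow> c' < K \<Longrightarrow> card (E c \<inter> E c') \<le> b"
  shows "K * a - b * (K * (real K - 1) / 2) \<le> card (\<Union>c<K. E c)"
  using assms
proof (induction K)
  case (Suc K)
  define U where "U = (\<Union>c<K. E c)"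
  have "finite U" "finite (E K)" using Suc.prems(1) unfolding U_def by auto
  have "U \<inter> E K = (\<Union>c<K. E c \<inter> E K)" unfolding U_def by blast
  then have "card (U \<inter> E K) \<le> (\<Sum>c<K. card (E c \<inter> E K))"
    using card_UN_le[of "{..<K}" "\<lambda>c. E c \<inter> E K"] by simp
  also have "real \<dots> \<le> K * b"
    using Suc.prems(3) sum_mono[of "{..<K}" "\<lambda>c. real (card (E c \<inter> E K))" "\<lambda>_. b"] by simp
  finally have "card (U \<inter> E K) \<le> K * b" by simp
  moreover have "real (card (U \<union> E K)) = card U + card (E K) - card (U \<inter> E K)"
    using card_Un_Int[OF \<open>finite U\<close> \<open>finite (E K)\<close>] by simp
  moreover have "K * a - b * (K * (real K - 1) / 2) \<le> card U"
    using Suc unfolding U_def by simp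
  moreover have "Suc K * a - b * (Suc K * (real (Suc K) - 1) / 2)
      = K * a - b * (K * (real K - 1) / 2) + a - K * b"
    by (simp add: field_simps)
  moreover have "(\<Union>c<Suc K. E c) = U \<union> E K" unfolding U_def by (auto simp: lessThan_Suc)
  ultimately show ?case using Suc.prems(2)[of K] by simp
qed simp

definition blue_bip_edges :: "nat \<Rightarrow> (nat set \<Rightarrow> bool) \<Rightarrow> (nat \<times> nat) set" where
  "blue_bip_edges n red = {(u, v). u \<in> {1..n} \<and> v \<in> {n+1..2*n} \<and> \<not> red {u, v}}"

locale bounded_colouring =
  fixes n :: nat and red :: "nat set \<Rightarrow> bool" and T :: real
  assumes no_blue_triangle: "\<not> blue_triangle (2*n) red"
    and card_red_clique_less: "\<And>K. red_clique (2*n) red K \<Longrightarrow> card K < T"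
begin

lemma T_pos: "0 < T"
  using card_red_clique_less[of "{}"] by (simp add: red_clique_def)

lemma T_gt_2:
  assumes "2 \<le> n"
  shows "2 < T"
proof (rule ccontr)
  assume "\<not> 2 < T"
  have blue: "\<not> red {a, b}" if "1 \<le> a" "a < b" "b \<le> 3" for a b
  proof
    assume "red {a, b}"
    then have "red_clique (2*n) red {a, b}"
      using that assms unfolding red_clique_def by (auto simp: insert_commute)
    then show False using card_red_clique_less[of "{a, b}"] that \<open>\<not> 2 < T\<close> by simp
  qed
  have "blue_triangle (2*n) red"
    unfolding blue_triangle_def using assms blue[of 1 2] blue[of 1 3] blue[of 2 3]
    by (intro exI[of _ 1] exI[of _ 2] exI[of _ 3]) simp
  then show False using no_blue_triangle by simp
qed

lemma card_blue_nbhd_less: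
  assumes "v \<in> {n+1..2*n}"
  shows "card {u \<in> {1..n}. \<not> red {u, v}} < T"
proof -
  define B where "B = {u \<in> {1..n}. \<not> red {u, v}}"
  have red_less: "red {x, y}" if "x \<in> B" "y \<in> B" "x < y" for x y
  proof (rule ccontr)
    assume "\<not> red {x, y}"
    with that assms have "blue_triangle (2*n) red"
      unfolding blue_triangle_def B_def by (intro exI[of _ x] exI[of _ y] exI[of _ v]) auto
    with no_blue_triangle show False ..
  qed
  have "red_clique (2*n) red B"
    unfolding red_clique_def
  proof (intro conjI ballI impI)
    show "B \<subseteq> {1..2*n}" by (auto simp: B_def)
    fix x y assume "x \<in> B" "y \<in> B" "x \<noteq> y"
    then show "red {x, y}"
      using red_less[of x y] red_less[of y x] by (cases "x < y") (auto simp: insert_commute)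
  qed
  then show ?thesis unfolding B_def by (rule card_red_clique_less)
qed

lemma card_blue_edges_le:
  assumes "E \<subseteq> blue_bip_edges n red"
  shows "card E \<le> card (snd ` E) * T"
proof -
  define B where "B v = {u \<in> {1..n}. \<not> red {u, v}}" for v
  have "E \<subseteq> {1..n} \<times> {n+1..2*n}" using assms by (auto simp: blue_bip_edges_def)
  then have "finite E" by (rule finite_subset) simp
  have "E \<subseteq> (\<Union>v\<in>snd ` E. (\<lambda>u. (u, v)) ` B v)"
  proof
    fix p assume "p \<in> E"
    then obtain u v where "p = (u, v)" "u \<in> B v" "v \<in> snd ` E"
      using assms by (cases p) (force simp: blue_bip_edges_def B_def)
    then show "p \<in> (\<Union>v\<in>snd ` E. (\<lambda>u. (u, v)) ` B v)" by blast
  qed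
  moreover have "finite (\<Union>v\<in>snd ` E. (\<lambda>u. (u, v)) ` B v)"
    using \<open>finite E\<close> by (simp add: B_def)
  ultimately have "card E \<le> card (\<Union>v\<in>snd ` E. (\<lambda>u. (u, v)) ` B v)"
    by (rule card_mono[rotated])
  also have "\<dots> \<le> (\<Sum>v\<in>snd ` E. card ((\<lambda>u. (u, v)) ` B v))"
    by (rule card_UN_le) (use \<open>finite E\<close> in simp)
  also have "\<dots> \<le> (\<Sum>v\<in>snd ` E. card (B v))"
    by (intro sum_mono card_image_le) (simp add: B_def)
  finally have "real (card E) \<le> (\<Sum>v\<in>snd ` E. real (card (B v)))"
    by (metis of_nat_le_iff of_nat_sum)
  also have "\<dots> \<le> (\<Sum>v\<in>snd ` E. T)"
    using assms unfolding B_def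
    by (intro sum_mono less_imp_le card_blue_nbhd_less) (auto simp: blue_bip_edges_def)
  finally show ?thesis by (simp add: mult.commute)
qed

lemma shifted_embedding_count:
  fixes I :: real
  assumes M: "bip_ordered_matching m M" and no_copy: "\<not> red_bip_copy n red m M"
    and ord: "\<forall>h\<in>{1..m}. ord_int (perm_seq m (match_perm m M))
                 (shift_seq (perm_seq m (match_perm m M)) (int h)) \<le> I"
    and "0 \<le> I" "1 \<le> K" "K + m \<le> n + 1"
  shows "K * (real n - m + 1) - T * I * (K * (real K - 1) / 2) \<le> (real K - 1 + m) * T"
proof -
  define \<pi> where "\<pi> = match_perm m M"
  have \<pi>: "inj_on \<pi> {1..m}" "\<pi> ` {1..m} \<subseteq> {1..m}"
    unfolding \<pi>_def using inj_on_match_perm[OF M] bip_ordered_matching_perm(2)[OF M] by auto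
  have "\<exists>S lv. S \<subseteq> {1..n} \<and> n + 1 \<le> card S + m \<and> mono_on S lv \<and>
      (\<forall>u\<in>S. lv u < m \<and> \<not> red {u, n + c + \<pi> (Suc (lv u))})" if "c < K" for c
    unfolding \<pi>_def
    by (rule blocked_vertices_of_no_red_copy[OF M no_copy, of c]) (use that assms(6) in simp, blast)
  then obtain S lv where S: "\<And>c. c < K \<Longrightarrow> S c \<subseteq> {1..n} \<and> n + 1 \<le> card (S c) + m \<and>
      mono_on (S c) (lv c) \<and> (\<forall>u\<in>S c. lv c u < m \<and> \<not> red {u, n + c + \<pi> (Suc (lv c u))})"
    by metis
  define E where "E c = blocked_edges (n + c) \<pi> (S c) (lv c)" for c
  have E_blue: "E c \<subseteq> blue_bip_edges n red" and snd_E: "snd ` E c \<subseteq> {n+1..n+K-1+m}"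
    if "c < K" for c
  proof -
    have "\<pi> (Suc (lv c u)) \<in> {1..m}" if "u \<in> S c" for u
      using S[OF \<open>c < K\<close>] that \<pi>(2) by (auto simp: image_subset_iff)
    then show "E c \<subseteq> blue_bip_edges n red" "snd ` E c \<subseteq> {n+1..n+K-1+m}"
      using S[OF \<open>c < K\<close>] \<open>c < K\<close> assms(6)
      unfolding E_def blocked_edges_def blue_bip_edges_def by fastforce+
  qed
  have "finite (E c)" if "c < K" for c
    using S[OF that] unfolding E_def blocked_edges_def
    by (meson finite_atLeastAtMost finite_imageI finite_subset)
  moreover have "real n - m + 1 \<le> card (E c)" if "c < K" for c
  proof -
    have "card (E c) = card (S c)"
      unfolding E_def blocked_edges_def by (rule card_image) (auto simp: inj_on_def)
    then show ?thesis using S[OF that] by linarith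
  qed
  moreover have "card (E c \<inter> E c') \<le> T * I" if "c < c'" "c' < K" for c c'
  proof -
    have "card (E c \<inter> E c') \<le> card (snd ` (E c \<inter> E c')) * T"
      using E_blue[of c] that by (intro card_blue_edges_le) auto
    also have "\<dots> \<le> I * T"
      using S[of c] S[of c'] that T_pos \<open>0 \<le> I\<close> ord
      unfolding E_def \<pi>_def[symmetric]
      by (intro mult_right_mono card_snd_blocked_edges_Int_le[OF \<pi>]) auto
    finally show ?thesis by (simp add: mult.commute)
  qed
  ultimately have "K * (real n - m + 1) - T * I * (K * (real K - 1) / 2) \<le> card (\<Union>c<K. E c)"
    by (rule card_UN_ge_uniform_Bonferroni)
  also have "\<dots> \<le> card (snd ` (\<Union>c<K. E c)) * T"
    using E_blue by (intro card_blue_edges_le) auto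
  also have "\<dots> \<le> (real K - 1 + m) * T"
  proof -
    have "snd ` (\<Union>c<K. E c) \<subseteq> {n+1..n+K-1+m}" using snd_E by blast
    then have "card (snd ` (\<Union>c<K. E c)) \<le> card {n+1..n+K-1+m}" by (intro card_mono) auto
    then show ?thesis using T_pos assms(5) by (intro mult_right_mono) auto
  qed
  finally show ?thesis .
qed

end

section \<open>Choice of the number of shifts\<close>

lemma exists_nat_quadratic_gt:
  fixes A x c :: real
  assumes "0 < A" "0 < x" "2 * x * c \<le> A\<^sup>2"
  obtains K :: nat where "1 \<le> K" "real K - 1 \<le> A / x" "c < K * (A - x * (real K - 1) / 2)"
proof
  define K where "K = nat \<lfloor>A / x\<rfloor> + 1"
  have "0 \<le> A / x" using assms by simp
  then have K: "real K - 1 \<le> A / x" "A / x < real K"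
    unfolding K_def by (simp_all add: of_nat_nat) linarith
  then show "real K - 1 \<le> A / x" by simp
  show "1 \<le> K" unfolding K_def by simp
  have "x * (real K - 1) \<le> A" using K(1) assms(2) by (simp add: pos_le_divide_eq mult.commute)
  then have "K * (A / 2) \<le> K * (A - x * (real K - 1) / 2)" by (intro mult_left_mono) auto
  moreover have "A / x * (A / 2) < K * (A / 2)"
    using K(2) assms(1) by (intro mult_strict_right_mono) auto
  moreover have "c \<le> A / x * (A / 2)"
    using assms by (simp add: power2_eq_square field_simps)
  ultimately show "c < K * (A - x * (real K - 1) / 2)" by linarith
qed

lemma powr_exponent_sum_le_2:
  fixes \<epsilon> \<alpha> \<beta> :: real
  assumes "0 < \<epsilon>" "0 < \<alpha>" "\<alpha> + \<beta> \<le> \<epsilon> / 4"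
  shows "(1 + 2 * \<beta>) + ((1 - \<epsilon>) * (1/2 + \<alpha>) + (1/2 + \<alpha>)) \<le> 2"
proof -
  have eq: "(1 + 2 * \<beta>) + ((1 - \<epsilon>) * (1/2 + \<alpha>) + (1/2 + \<alpha>))
      = 2 + 2 * (\<alpha> + \<beta>) - \<epsilon> / 2 - \<epsilon> * \<alpha>"
    by (simp add: field_simps)
  have "0 \<le> \<epsilon> * \<alpha>" using assms by simp
  then show ?thesis unfolding eq using assms by argo
qed

lemma sq_mult_powr_mult_powr_le:
  fixes \<epsilon> \<alpha> \<beta> x T :: real
  assumes "0 < \<epsilon>" "0 < \<alpha>" "\<alpha> + \<beta> \<le> \<epsilon> / 4" "1 \<le> x"
    and "0 \<le> T" "T \<le> x powr (1/2 + \<beta>) / 4"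
  shows "T\<^sup>2 * x powr ((1 - \<epsilon>) * (1/2 + \<alpha>)) * x powr (1/2 + \<alpha>) \<le> x\<^sup>2 / 16"
proof -
  have "T\<^sup>2 * x powr ((1 - \<epsilon>) * (1/2 + \<alpha>)) * x powr (1/2 + \<alpha>)
      \<le> (x powr (1/2 + \<beta>) / 4)\<^sup>2 * x powr ((1 - \<epsilon>) * (1/2 + \<alpha>)) * x powr (1/2 + \<alpha>)"
    using assms(5,6) by (intro mult_right_mono power_mono) auto
  also have "\<dots> = x powr ((1 + 2 * \<beta>) + ((1 - \<epsilon>) * (1/2 + \<alpha>) + (1/2 + \<alpha>))) / 16"
  proof -
    have "(x powr (1/2 + \<beta>))\<^sup>2 = x powr (1 + 2 * \<beta>)"
      using \<open>1 \<le> x\<close> powr_power[of x "1/2 + \<beta>" 2] by (simp add: algebra_simps)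
    then show ?thesis unfolding powr_add by (simp add: power_divide)
  qed
  also have "\<dots> \<le> x powr 2 / 16"
    using powr_exponent_sum_le_2[OF assms(1-3)] \<open>1 \<le> x\<close>
    by (intro divide_right_mono powr_mono) auto
  finally show ?thesis using \<open>1 \<le> x\<close> by (simp add: powr_realpow')
qed

lemma three_eighths_le_diff:
  fixes x a b :: real
  assumes "0 < x" "a \<le> x powr (3/4)" "b \<le> x powr (3/4) / 4" "2 < b"
  shows "3 / 8 * x \<le> x - a - b"
proof -
  define y where "y = x powr (1/4)"
  have "0 < y" unfolding y_def using assms(1) by simp
  have y4: "y ^ 4 = x" and y3: "y ^ 3 = x powr (3/4)"
    unfolding y_def using assms(1) by (simp_all add: powr_power)
  have "2 ^ 3 < y ^ 3" using assms(3,4) y3 by simp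
  then have "2 < y" using \<open>0 < y\<close> power_less_imp_less_base[of 2 3 y] by simp
  then have "y ^ 3 * (5 / 8 * y - 5 / 4) \<ge> 0" using \<open>0 < y\<close> by simp
  then show ?thesis
    using assms(2,3) y3 y4 by (simp add: algebra_simps power_numeral_reduce)
qed

lemma choice_of_K:
  fixes \<epsilon> \<alpha> \<beta> m I T :: real and n :: nat
  assumes "0 < \<epsilon>" "\<epsilon> < 1" "0 < \<alpha>" "0 < \<beta>" "\<alpha> + \<beta> \<le> \<epsilon> / 4"
  defines "m \<equiv> real n powr (1/2 + \<alpha>)" and "I \<equiv> real n powr ((1 - \<epsilon>) * (1/2 + \<alpha>))"
    and "T \<equiv> real n powr (1/2 + \<beta>) / 4 - real n powr (\<epsilon>/4) / 2"
  assumes "2 < T"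
  obtains K :: nat where "1 \<le> K" "K + m \<le> n + 1"
    and "(real K - 1 + m) * T < K * (n - m + 1) - T * I * (K * (real K - 1) / 2)"
proof -
  have "n \<noteq> 0" using \<open>2 < T\<close> unfolding T_def by (cases "n = 0") auto
  then have n: "1 \<le> real n" by simp
  have T_le: "T \<le> real n powr (1/2 + \<beta>) / 4" unfolding T_def by simp
  define A where "A = n - m + 1 - T"
  have "3 / 8 * n \<le> n - m - T"
  proof (rule three_eighths_le_diff)
    show "m \<le> real n powr (3/4)" unfolding m_def using assms n by (intro powr_mono) auto
    have "real n powr (1/2 + \<beta>) \<le> real n powr (3/4)" using assms n by (intro powr_mono) auto
    then show "T \<le> real n powr (3/4) / 4" using T_le by linarith
  qed (use n \<open>2 < T\<close> in auto)
  then have A_ge: "3 / 8 * n \<le> A" unfolding A_def by simp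
  have "1 \<le> I" "1 \<le> m"
    unfolding I_def m_def using n assms by (simp_all add: ge_one_powr_ge_zero)
  have "0 < A" "1 \<le> T * I"
    using A_ge n \<open>2 < T\<close> \<open>1 \<le> I\<close> mult_mono[of 1 T 1 I] by auto
  have "2 * (T * I) * ((m - 1) * T) \<le> A\<^sup>2"
  proof -
    have "2 * (T * I) * ((m - 1) * T) \<le> 2 * (T\<^sup>2 * I * m)"
      using \<open>2 < T\<close> \<open>1 \<le> I\<close> by (simp add: power2_eq_square algebra_simps)
    also have "\<dots> \<le> 9 / 64 * (real n)\<^sup>2"
      using sq_mult_powr_mult_powr_le[OF assms(1,3,5) n _ T_le] \<open>2 < T\<close> zero_le_power2[of "real n"]
      unfolding I_def m_def by linarith
    also have "\<dots> = (3 / 8 * n)\<^sup>2" by (simp add: power_mult_distrib power_divide)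
    also have "\<dots> \<le> A\<^sup>2" using A_ge n by (intro power_mono) auto
    finally show ?thesis .
  qed
  with \<open>0 < A\<close> \<open>1 \<le> T * I\<close> obtain K :: nat where K: "1 \<le> K" "real K - 1 \<le> A / (T * I)"
    and gt: "(m - 1) * T < K * (A - T * I * (real K - 1) / 2)"
    using exists_nat_quadratic_gt[of A "T * I" "(m - 1) * T"] by auto
  have "A / (T * I) \<le> A"
    using \<open>0 < A\<close> \<open>1 \<le> T * I\<close> by (simp add: divide_le_eq mult_le_cancel_left1)
  then have "K + m \<le> n + 1" using K(2) \<open>2 < T\<close> unfolding A_def by linarith
  moreover have "K * (n - m + 1) - T * I * (K * (real K - 1) / 2) - (real K - 1 + m) * T
      = K * (A - T * I * (real K - 1) / 2) - (m - 1) * T"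
    unfolding A_def by (simp add: algebra_simps)
  ultimately show ?thesis using that K(1) gt by fastforce
qed

theorem theorem3p4:
  fixes \<epsilon> \<alpha> \<beta> :: real and n m :: nat and M :: "(nat \<times> nat) set"
    and red :: "nat set \<Rightarrow> bool"
  assumes "0 < \<epsilon>" "\<epsilon> < 1" "0 < \<alpha>" "0 < \<beta>" "\<alpha> + \<beta> \<le> \<epsilon> / 4"
    and "real m = real n powr (1/2 + \<alpha>)"
    and "bip_ordered_matching m M"
    and "\<forall>h\<in>{1..m}. real (ord_int (perm_seq m (match_perm m M))
                          (shift_seq (perm_seq m (match_perm m M)) (int h)))
                   \<le> real n powr ((1 - \<epsilon>) * (1/2 + \<alpha>))"
  shows "blue_triangle (2*n) red
         \<or> (\<exists>K. red_clique (2*n) red K \<and>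
                real (card K) \<ge> real n powr (1/2 + \<beta>) / 4 - real n powr (\<epsilon>/4) / 2)
         \<or> red_bip_copy n red m M"
proof (rule ccontr)
  define T where "T = real n powr (1/2 + \<beta>) / 4 - real n powr (\<epsilon>/4) / 2"
  define I where "I = real n powr ((1 - \<epsilon>) * (1/2 + \<alpha>))"
  assume contra: "\<not> ?thesis"
  then interpret bounded_colouring n red T
    by unfold_locales (auto simp: T_def not_le)
  have "2 \<le> n"
    using T_pos unfolding T_def by (cases "n = 0 \<or> n = 1") auto
  then have "2 < T" by (rule T_gt_2)
  obtain K :: nat where K: "1 \<le> K" "K + real m \<le> n + 1"
    and gt: "(real K - 1 + m) * T < K * (real n - m + 1) - T * I * (K * (real K - 1) / 2)"
    by (rule choice_of_K[OF assms(1-5) \<open>2 < T\<close>[unfolded T_def], folded T_def I_def assms(6)])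
  have "K * (real n - m + 1) - T * I * (K * (real K - 1) / 2) \<le> (real K - 1 + m) * T"
    using contra assms(8) K unfolding I_def
    by (intro shifted_embedding_count[OF assms(7)])
      (auto simp: of_nat_add[symmetric] simp del: of_nat_add)
  with gt show False by linarith
qed

end
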